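(* Let $i=\sqrt{-1}$, let $\alpha>0$, and let $\lambda\in\mathbb C$ satisfy $\Im\lambda\notin\{\alpha,-\alpha\}$. Define $u_0=\alpha i+\lambda$, $w_0=\alpha i-\lambda$, and for $h=0,1,\dots$ $$u_{h+1}=\tfrac12\left(u_h-1/u_h\right),\qquad w_{h+1}=\tfrac12\left(w_h-1/w_h\right).$$ Then all $u_h,w_h$ are well defined and nonzero, and $$\lim_{h\to\infty}(u_h+w_h)=\begin{cases}2i,& |\Im\lambda|<\alpha,\\ 0,& |\Im\lambda|>\alpha.\end{cases}$$ *)

theory Defs
  imports Complex_Main
begin

end

theory Submission
  imports Defs
begin

text \<open>The map \<open>z \<mapsto> (z - 1/z)/2\<close> is Newton's method for \<open>z\<^sup>2 + 1 = 0\<close>. It preserves each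
  open half plane \<open>\<plusminus>Im z > 0\<close>, and the Cayley transform \<open>(z - \<i>)/(z + \<i>)\<close> conjugates it on the
  upper half plane to squaring on the unit disc, so every orbit starting with \<open>Im z > 0\<close> converges
  to \<open>\<i>\<close>; by complex conjugation orbits starting with \<open>Im z < 0\<close> converge to \<open>-\<i>\<close>. Hence \<open>u\<^sub>h\<close>
  and \<open>w\<^sub>h\<close> converge to \<open>\<i>\<close> times the signs of \<open>\<alpha> + Im \<lambda>\<close> and \<open>\<alpha> - Im \<lambda>\<close>, which agree exactly
  when \<open>\<bar>Im \<lambda>\<bar> < \<alpha>\<close>.\<close>

definition newton_sqrt_minus_one :: "complex \<Rightarrow> complex" where
  "newton_sqrt_minus_one z = (z - 1 / z) / 2"

definition cayley :: "complex \<Rightarrow> complex" where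
  "cayley z = (z - \<i>) / (z + \<i>)"

lemma Im_newton_sqrt_minus_one_pos:
  assumes "Im z > 0"
  shows "Im (newton_sqrt_minus_one z) > 0"
proof -
  have "(Re z)\<^sup>2 + (Im z)\<^sup>2 > 0"
    using assms by (simp add: add_nonneg_pos)
  hence "Im (1 / z) < 0"
    using assms by (simp add: Im_divide)
  thus ?thesis
    using assms by (simp add: newton_sqrt_minus_one_def)
qed

lemma newton_sqrt_minus_one_cnj:
  "newton_sqrt_minus_one (cnj z) = cnj (newton_sqrt_minus_one z)"
  by (simp add: newton_sqrt_minus_one_def)

lemma plus_i_nonzero_if_Im_pos:
  assumes "Im z > 0"
  shows "z + \<i> \<noteq> 0"
  using assms by (auto simp: complex_eq_iff)

lemma cayley_newton_sqrt_minus_one: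
  assumes "z \<noteq> 0"
  shows "cayley (newton_sqrt_minus_one z) = (cayley z)\<^sup>2"
proof -
  have minus: "newton_sqrt_minus_one z - \<i> = (z - \<i>)\<^sup>2 / (2 * z)"
    and plus: "newton_sqrt_minus_one z + \<i> = (z + \<i>)\<^sup>2 / (2 * z)"
    using assms by (simp_all add: newton_sqrt_minus_one_def field_simps power2_eq_square)
  show ?thesis
    unfolding cayley_def minus plus using assms by (simp add: power_divide)
qed

lemma norm_cayley_less_one:
  assumes "Im z > 0"
  shows "norm (cayley z) < 1"
proof -
  have "(cmod (z - \<i>))\<^sup>2 < (cmod (z + \<i>))\<^sup>2"
    using assms unfolding cmod_power2 by (simp add: power2_eq_square algebra_simps)
  hence "cmod (z - \<i>) < cmod (z + \<i>)"
    using power2_less_imp_less by fastforce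
  thus ?thesis
    using plus_i_nonzero_if_Im_pos[OF assms] by (simp add: cayley_def norm_divide divide_less_eq)
qed

lemma cayley_inverse:
  assumes "z + \<i> \<noteq> 0"
  shows "z = \<i> * (1 + cayley z) / (1 - cayley z)"
proof -
  have "1 - cayley z = 2 * \<i> / (z + \<i>)" and "1 + cayley z = 2 * z / (z + \<i>)"
    using assms by (simp_all add: cayley_def field_simps)
  thus ?thesis
    using assms by simp
qed

lemma newton_orbit_Im_pos:
  assumes step: "\<And>h. z (Suc h) = newton_sqrt_minus_one (z h)" and pos: "Im (z 0) > 0"
  shows "Im (z n) > 0"
  by (induction n) (simp_all add: pos step Im_newton_sqrt_minus_one_pos)

lemma newton_orbit_tendsto_i:
  assumes step: "\<And>h. z (Suc h) = newton_sqrt_minus_one (z h)" and pos: "Im (z 0) > 0"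
  shows "z \<longlonglongrightarrow> \<i>"
proof -
  have Im_pos: "Im (z n) > 0" for n
    using newton_orbit_Im_pos[OF step pos] .
  have cayley_orbit: "cayley (z n) = cayley (z 0) ^ (2 ^ n)" for n
  proof (induction n)
    case (Suc n)
    have "z n \<noteq> 0"
      using Im_pos[of n] by auto
    hence "cayley (z (Suc n)) = (cayley (z n))\<^sup>2"
      by (simp add: step cayley_newton_sqrt_minus_one)
    also have "\<dots> = cayley (z 0) ^ (2 ^ Suc n)"
      by (simp add: Suc.IH power_mult[symmetric] mult.commute)
    finally show ?case .
  qed simp
  have "(\<lambda>n. cayley (z 0) ^ n) \<longlonglongrightarrow> 0"
    using norm_cayley_less_one[OF pos] by (rule LIMSEQ_power_zero)
  from LIMSEQ_subseq_LIMSEQ[OF this, of "\<lambda>n. 2 ^ n"]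
  have "(\<lambda>n. cayley (z n)) \<longlonglongrightarrow> 0"
    by (simp add: strict_mono_def o_def flip: cayley_orbit)
  hence "(\<lambda>n. \<i> * (1 + cayley (z n)) / (1 - cayley (z n))) \<longlonglongrightarrow> \<i> * (1 + 0) / (1 - 0)"
    by (intro tendsto_intros) simp_all
  moreover have "(\<lambda>n. \<i> * (1 + cayley (z n)) / (1 - cayley (z n))) = z"
    by (intro ext cayley_inverse[symmetric] plus_i_nonzero_if_Im_pos Im_pos)
  ultimately show ?thesis
    by simp
qed

lemma newton_orbit_nonzero_tendsto_sgn_Im:
  assumes step: "\<And>h. z (Suc h) = newton_sqrt_minus_one (z h)" and Im_nz: "Im (z 0) \<noteq> 0"
  shows "(\<forall>n. z n \<noteq> 0) \<and> z \<longlonglongrightarrow> of_real (sgn (Im (z 0))) * \<i>"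
proof (cases "Im (z 0) > 0")
  case True
  have "z n \<noteq> 0" for n
    using newton_orbit_Im_pos[OF step True, of n] by auto
  with newton_orbit_tendsto_i[OF step True] True show ?thesis
    by simp
next
  case False
  with Im_nz have neg: "Im (cnj (z 0)) > 0"
    by simp
  have cnj_step: "cnj (z (Suc h)) = newton_sqrt_minus_one (cnj (z h))" for h
    by (simp add: step newton_sqrt_minus_one_cnj)
  have "z n \<noteq> 0" for n
    using newton_orbit_Im_pos[OF cnj_step neg, of n] by auto
  moreover have "z \<longlonglongrightarrow> - \<i>"
    using tendsto_cnj[OF newton_orbit_tendsto_i[OF cnj_step neg]] by simp
  ultimately show ?thesis
    using False Im_nz by simp
qed

theorem mainTheorem5:
  fixes \<alpha> :: real and l :: complex and u w :: "nat \<Rightarrow> complex"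
  assumes alpha_pos: "\<alpha> > 0"
    and Im_ne: "Im l \<noteq> \<alpha>" "Im l \<noteq> - \<alpha>"
    and u0: "u 0 = complex_of_real \<alpha> * \<i> + l"
    and w0: "w 0 = complex_of_real \<alpha> * \<i> - l"
    and u_step: "\<And>h. u (Suc h) = (u h - 1 / u h) / 2"
    and w_step: "\<And>h. w (Suc h) = (w h - 1 / w h) / 2"
  shows "(\<forall>h. u h \<noteq> 0 \<and> w h \<noteq> 0)
    \<and> (\<bar>Im l\<bar> < \<alpha> \<longrightarrow> (\<lambda>h. u h + w h) \<longlonglongrightarrow> 2 * \<i>)
    \<and> (\<bar>Im l\<bar> > \<alpha> \<longrightarrow> (\<lambda>h. u h + w h) \<longlonglongrightarrow> 0)"
proof -
  have "Im (u 0) = \<alpha> + Im l" "Im (w 0) = \<alpha> - Im l"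
    using u0 w0 by simp_all
  with Im_ne have "Im (u 0) \<noteq> 0" "Im (w 0) \<noteq> 0"
    by auto
  with u_step w_step
  have u: "(\<forall>n. u n \<noteq> 0) \<and> u \<longlonglongrightarrow> of_real (sgn (\<alpha> + Im l)) * \<i>"
    and w: "(\<forall>n. w n \<noteq> 0) \<and> w \<longlonglongrightarrow> of_real (sgn (\<alpha> - Im l)) * \<i>"
    using newton_orbit_nonzero_tendsto_sgn_Im[of u] newton_orbit_nonzero_tendsto_sgn_Im[of w] u0 w0
    by (simp_all add: newton_sqrt_minus_one_def)
  hence sum: "(\<lambda>h. u h + w h) \<longlonglongrightarrow> of_real (sgn (\<alpha> + Im l) + sgn (\<alpha> - Im l)) * \<i>"
    by (simp add: tendsto_add distrib_right)
  have "\<bar>Im l\<bar> < \<alpha> \<Longrightarrow> sgn (\<alpha> + Im l) + sgn (\<alpha> - Im l) = 2"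
    and "\<bar>Im l\<bar> > \<alpha> \<Longrightarrow> sgn (\<alpha> + Im l) + sgn (\<alpha> - Im l) = 0"
    using alpha_pos by (auto simp: sgn_if)
  with u w sum show ?thesis
    by (auto simp del: of_real_add)
qed

end
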